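(* Let $a_1,\dots,a_7$ and $\alpha_1,\dots,\alpha_7$ be positive real numbers with $\sum_{i=1}^7\alpha_i=\pi$. Then $$\sum_{i=1}^7 a_i\cos\alpha_i\;\le\;\cos\frac{\pi}{7}\cdot\frac{1}{a_1a_2\cdots a_7}\,\psi(a_1^2,a_2^2,\dots,a_7^2),$$ where $\psi(x_1,\dots,x_7)=x_1x_2x_3x_4+x_2x_3x_4x_5+x_3x_4x_5x_6+x_4x_5x_6x_7+x_5x_6x_7x_1+x_6x_7x_1x_2+x_7x_1x_2x_3$. *)

theory Defs
  imports Complex_Main
begin

definition psi7 :: "real \<Rightarrow> real \<Rightarrow> real \<Rightarrow> real \<Rightarrow> real \<Rightarrow> real \<Rightarrow> real \<Rightarrow> real" where
  "psi7 x1 x2 x3 x4 x5 x6 x7 =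
     x1*x2*x3*x4 + x2*x3*x4*x5 + x3*x4*x5*x6 + x4*x5*x6*x7
   + x5*x6*x7*x1 + x6*x7*x1*x2 + x7*x1*x2*x3"

end

theory Submission
  imports Defs
begin

text \<open>
  Set \<open>c = cos (\<pi>/7)\<close>. The quadratic form
  \<open>y\<^sub>1y\<^sub>2 + \<dots> + y\<^sub>6y\<^sub>7 - y\<^sub>7y\<^sub>1\<close> on \<open>\<real>\<^sup>7\<close> is bounded by
  \<open>c \<Sum> y\<^sub>i\<^sup>2\<close>, since \<open>c\<close> is its largest eigenvalue; this is certified by an explicit
  sum of squares modulo the minimal polynomial \<open>8c\<^sup>3 - 4c\<^sup>2 - 4c + 1\<close> of \<open>c\<close>.
  Placing vectors of lengths \<open>x\<^sub>i\<close> in the plane at successive angles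
  \<open>\<beta>\<^sub>1, \<beta>\<^sub>1 + \<beta>\<^sub>2, \<dots>\<close>, the last one ends at angle \<open>\<pi>\<close>, which produces the sign in
  front of \<open>y\<^sub>7y\<^sub>1\<close>; applying the bound to both coordinates gives
  \<open>\<Sum> x\<^sub>ix\<^sub>i\<^sub>+\<^sub>1 cos \<beta>\<^sub>i \<le> c \<Sum> x\<^sub>i\<^sup>2\<close> whenever \<open>\<Sum> \<beta>\<^sub>i = \<pi>\<close>.
  Finally each \<open>a\<^sub>i\<close> factors as \<open>x\<^sub>jx\<^sub>k\<close> along a 7-cycle with
  \<open>\<Sum> x\<^sub>i\<^sup>2 = \<psi>(a\<^sub>1\<^sup>2, \<dots>, a\<^sub>7\<^sup>2) / (a\<^sub>1 \<cdots> a\<^sub>7)\<close>.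
\<close>

lemma antiperiodic_cycle_form_sos:
  fixes c y1 y2 y3 y4 y5 y6 y7 :: real
  shows "c * (y1^2 + y2^2 + y3^2 + y4^2 + y5^2 + y6^2 + y7^2)
           - (y1*y2 + y2*y3 + y3*y4 + y4*y5 + y5*y6 + y6*y7 - y7*y1)
         = c * (y1 + 2*(1 + c - 2*c^2)*(y7 - y2))^2
         + (2*c^2 - 1) * (y2 + (1 - 2*c)*y3 + (4*c^2 - 2*c - 1)*y7)^2
         + 1/2 * (y3 - y4 + (4*c^2 - 2*c - 1)*y7)^2
         + (c - 1/2) * (y4 + 2*(1 - 2*c^2)*y5 + 2*(1 + c - 2*c^2)*y7)^2
         + (1 + c - 2*c^2) * (y5 + y7 - 2*c*y6)^2
         + (8*c^3 - 4*c^2 - 4*c + 1)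
           * ((3/2 + 4*c - 2*c^2 - 4*c^3)*y7^2 - (2 + 4*c - 4*c^2)*y2*y7 + (1 + c - 2*c^2)*y2^2
              + y1*y7 - y1*y2 + (4*c^2 - 2*c - 1)*y3*y7 + (1/2 - c)*y3^2 + y2*y3
              + 2*(1 + c - 2*c^2)*y5*y7 + (1 - 2*c^2)*y5^2 + y4*y7 + y4*y5
              - y6*y7 - y5*y6 + c*y6^2)"
  by (simp add: algebra_simps power2_eq_square power3_eq_cube)

lemma cos_pi_div_7_bounds: "0 < cos (pi/7)" "1 < 2 * cos (pi/7)^2" "cos (pi/7) < 1"
proof -
  show "0 < cos (pi/7)"
    by (rule cos_gt_zero_pi) (use pi_gt_zero in linarith)+
  have "sqrt 2 / 2 < cos (pi/7)"
    using cos_mono_less_eq[of "pi/4" "pi/7"] pi_gt_zero by (simp add: cos_45)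
  then have "(sqrt 2 / 2)^2 < cos (pi/7)^2"
    by (intro power_strict_mono) auto
  then show "1 < 2 * cos (pi/7)^2"
    by (simp add: power_divide)
  show "cos (pi/7) < 1"
    using cos_mono_less_eq[of "pi/7" 0] pi_gt_zero by simp
qed

lemma cos_pi_div_7_cubic: "8 * cos (pi/7)^3 - 4 * cos (pi/7)^2 - 4 * cos (pi/7) + 1 = 0"
proof -
  define c where "c = cos (pi/7)"
  have "cos (4 * (pi/7)) = - cos (3 * (pi/7))"
    using cos_pi_minus[of "3 * (pi/7)"] by (simp add: field_simps)
  moreover have "cos (4 * (pi/7)) = 2 * (2*c^2 - 1)^2 - 1"
    using cos_double_cos[of "2 * (pi/7)"] cos_double_cos[of "pi/7"] by (simp add: c_def)
  moreover have "cos (3 * (pi/7)) = 4*c^3 - 3*c"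
    unfolding c_def by (rule cos_treble_cos)
  ultimately have "(c + 1) * (8*c^3 - 4*c^2 - 4*c + 1) = 0"
    by (simp add: algebra_simps power2_eq_square power3_eq_cube)
  moreover have "c > 0"
    using cos_pi_div_7_bounds by (simp add: c_def)
  ultimately show ?thesis by (simp add: c_def)
qed

lemma antiperiodic_cycle_form_le:
  fixes y1 y2 y3 y4 y5 y6 y7 :: real
  shows "y1*y2 + y2*y3 + y3*y4 + y4*y5 + y5*y6 + y6*y7 - y7*y1
         \<le> cos (pi/7) * (y1^2 + y2^2 + y3^2 + y4^2 + y5^2 + y6^2 + y7^2)"
proof -
  define c where "c = cos (pi/7)"
  have "c > 0" "1 < 2*c^2" "c < 1"
    using cos_pi_div_7_bounds by (simp_all add: c_def)
  moreover have "1 + c - 2*c^2 = (1 - c) * (1 + 2*c)"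
    by (simp add: algebra_simps power2_eq_square)
  moreover have "c^2 < c"
    using \<open>c > 0\<close> \<open>c < 1\<close> by (simp add: power2_eq_square)
  ultimately have weights: "0 \<le> c" "0 \<le> 2*c^2 - 1" "0 \<le> c - 1/2" "0 \<le> 1 + c - 2*c^2"
    by auto
  have "8*c^3 - 4*c^2 - 4*c + 1 = 0"
    unfolding c_def by (rule cos_pi_div_7_cubic)
  then have "0 \<le> c * (y1^2 + y2^2 + y3^2 + y4^2 + y5^2 + y6^2 + y7^2)
              - (y1*y2 + y2*y3 + y3*y4 + y4*y5 + y5*y6 + y6*y7 - y7*y1)"
    unfolding antiperiodic_cycle_form_sos[of c]
    by (simp only: mult_zero_left add_0_right) (intro add_nonneg_nonneg mult_nonneg_nonneg weights; simp)
  then show ?thesis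
    by (simp add: c_def)
qed

lemma cycle_cos_sum_le:
  fixes x1 x2 x3 x4 x5 x6 x7 b1 b2 b3 b4 b5 b6 b7 :: real
  assumes "b1 + b2 + b3 + b4 + b5 + b6 + b7 = pi"
  shows "x1*x2*cos b1 + x2*x3*cos b2 + x3*x4*cos b3 + x4*x5*cos b4
           + x5*x6*cos b5 + x6*x7*cos b6 + x7*x1*cos b7
         \<le> cos (pi/7) * (x1^2 + x2^2 + x3^2 + x4^2 + x5^2 + x6^2 + x7^2)"
proof -
  define p2 where "p2 = b1"
  define p3 where "p3 = p2 + b2"
  define p4 where "p4 = p3 + b3"
  define p5 where "p5 = p4 + b4"
  define p6 where "p6 = p5 + b5"
  define p7 where "p7 = p6 + b6"
  have b7: "b7 = pi - p7"
    using assms unfolding p7_def p6_def p5_def p4_def p3_def p2_def by simp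
  have inner: "x*y*cos (q - p) = (x*cos p)*(y*cos q) + (x*sin p)*(y*sin q)" for x y p q :: real
    by (simp add: cos_diff algebra_simps)
  have norm: "x^2 = (x*cos p)^2 + (x*sin p)^2" for x p :: real
    by (simp add: power_mult_distrib flip: distrib_left)
  have "x1*x2*cos b1 + x2*x3*cos b2 + x3*x4*cos b3 + x4*x5*cos b4
          + x5*x6*cos b5 + x6*x7*cos b6 + x7*x1*cos b7
        = (x1*(x2*cos p2) + (x2*cos p2)*(x3*cos p3) + (x3*cos p3)*(x4*cos p4)
            + (x4*cos p4)*(x5*cos p5) + (x5*cos p5)*(x6*cos p6) + (x6*cos p6)*(x7*cos p7)
            - (x7*cos p7)*x1)
        + (0*(x2*sin p2) + (x2*sin p2)*(x3*sin p3) + (x3*sin p3)*(x4*sin p4)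
            + (x4*sin p4)*(x5*sin p5) + (x5*sin p5)*(x6*sin p6) + (x6*sin p6)*(x7*sin p7)
            - (x7*sin p7)*0)"
    using inner[of x2 x3 p2 p3] inner[of x3 x4 p3 p4] inner[of x4 x5 p4 p5]
      inner[of x5 x6 p5 p6] inner[of x6 x7 p6 p7]
    unfolding b7 by (simp add: p2_def p3_def p4_def p5_def p6_def p7_def algebra_simps)
  also have "\<dots> \<le> cos (pi/7) * (x1^2 + (x2*cos p2)^2 + (x3*cos p3)^2 + (x4*cos p4)^2
                     + (x5*cos p5)^2 + (x6*cos p6)^2 + (x7*cos p7)^2)
              + cos (pi/7) * (0^2 + (x2*sin p2)^2 + (x3*sin p3)^2 + (x4*sin p4)^2
                     + (x5*sin p5)^2 + (x6*sin p6)^2 + (x7*sin p7)^2)"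
    by (intro add_mono antiperiodic_cycle_form_le)
  also have "\<dots> = cos (pi/7) * (x1^2 + x2^2 + x3^2 + x4^2 + x5^2 + x6^2 + x7^2)"
    by (simp only: norm[of x2 p2] norm[of x3 p3] norm[of x4 p4] norm[of x5 p5] norm[of x6 p6]
        norm[of x7 p7]) (simp add: algebra_simps)
  finally show ?thesis .
qed

text \<open>
  The witness is \<open>x\<^sub>i = a\<^sub>ia\<^sub>i\<^sub>+\<^sub>1a\<^sub>i\<^sub>+\<^sub>2a\<^sub>i\<^sub>+\<^sub>3 / \<surd>(a\<^sub>1 \<cdots> a\<^sub>7)\<close>
  (indices mod 7): the index sets of \<open>x\<^sub>i\<close> and \<open>x\<^sub>i\<^sub>+\<^sub>3\<close> meet only in \<open>i + 3\<close> and
  together cover every index once more, so \<open>x\<^sub>ix\<^sub>i\<^sub>+\<^sub>3 = a\<^sub>i\<^sub>+\<^sub>3\<close>.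
\<close>

lemma cyclic_factorization_psi7:
  fixes a :: "nat \<Rightarrow> real"
  assumes "\<And>i. i \<in> {1..7} \<Longrightarrow> a i > 0"
  obtains x1 x2 x3 x4 x5 x6 x7 :: real
  where "x1*x4 = a 4" "x4*x7 = a 7" "x7*x3 = a 3" "x3*x6 = a 6"
    and "x6*x2 = a 2" "x2*x5 = a 5" "x5*x1 = a 1"
    and "x1^2 + x4^2 + x7^2 + x3^2 + x6^2 + x2^2 + x5^2
         = 1 / (\<Prod>i=1..7. a i) * psi7 ((a 1)^2) ((a 2)^2) ((a 3)^2) ((a 4)^2) ((a 5)^2) ((a 6)^2) ((a 7)^2)"
proof -
  define P where "P = a 1 * a 2 * a 3 * a 4 * a 5 * a 6 * a 7"
  have "P > 0"
    unfolding P_def using assms by simp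
  have prod_eq: "(\<Prod>i=1..7. a i) = P"
    by (simp add: P_def eval_nat_numeral algebra_simps)
  define r where "r = sqrt P"
  have "r^2 = P"
    using \<open>P > 0\<close> by (simp add: r_def)
  have prod_div: "(u / r) * (v / r) = w" if "u * v = w * P" for u v w
    using that \<open>P > 0\<close> \<open>r^2 = P\<close> by (simp add: field_simps power2_eq_square)
  have square_div: "(u / r)^2 = u^2 / P" for u
    using \<open>r^2 = P\<close> by (simp add: power_divide)
  show thesis
  proof
    show "(a 1 * a 2 * a 3 * a 4 / r) * (a 4 * a 5 * a 6 * a 7 / r) = a 4"
      "(a 4 * a 5 * a 6 * a 7 / r) * (a 7 * a 1 * a 2 * a 3 / r) = a 7"
      "(a 7 * a 1 * a 2 * a 3 / r) * (a 3 * a 4 * a 5 * a 6 / r) = a 3"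
      "(a 3 * a 4 * a 5 * a 6 / r) * (a 6 * a 7 * a 1 * a 2 / r) = a 6"
      "(a 6 * a 7 * a 1 * a 2 / r) * (a 2 * a 3 * a 4 * a 5 / r) = a 2"
      "(a 2 * a 3 * a 4 * a 5 / r) * (a 5 * a 6 * a 7 * a 1 / r) = a 5"
      "(a 5 * a 6 * a 7 * a 1 / r) * (a 1 * a 2 * a 3 * a 4 / r) = a 1"
      by (rule prod_div; simp add: P_def algebra_simps)+
    show "(a 1 * a 2 * a 3 * a 4 / r)^2 + (a 4 * a 5 * a 6 * a 7 / r)^2
          + (a 7 * a 1 * a 2 * a 3 / r)^2 + (a 3 * a 4 * a 5 * a 6 / r)^2
          + (a 6 * a 7 * a 1 * a 2 / r)^2 + (a 2 * a 3 * a 4 * a 5 / r)^2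
          + (a 5 * a 6 * a 7 * a 1 / r)^2
          = 1 / (\<Prod>i=1..7. a i) * psi7 ((a 1)^2) ((a 2)^2) ((a 3)^2) ((a 4)^2) ((a 5)^2) ((a 6)^2) ((a 7)^2)"
      unfolding prod_eq square_div psi7_def using \<open>P > 0\<close>
      by (simp add: field_simps power_mult_distrib)
  qed
qed

theorem theorem3:
  fixes a \<alpha> :: "nat \<Rightarrow> real"
  assumes "\<And>i. i \<in> {1..7} \<Longrightarrow> a i > 0"
      and "\<And>i. i \<in> {1..7} \<Longrightarrow> \<alpha> i > 0"
      and "(\<Sum>i=1..7. \<alpha> i) = pi"
  shows "(\<Sum>i=1..7. a i * cos (\<alpha> i))
         \<le> cos (pi / 7) * (1 / (\<Prod>i=1..7. a i))
            * psi7 ((a 1)^2) ((a 2)^2) ((a 3)^2) ((a 4)^2) ((a 5)^2) ((a 6)^2) ((a 7)^2)"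
proof -
  obtain x1 x2 x3 x4 x5 x6 x7
    where products: "x1*x4 = a 4" "x4*x7 = a 7" "x7*x3 = a 3" "x3*x6 = a 6"
      "x6*x2 = a 2" "x2*x5 = a 5" "x5*x1 = a 1"
    and squares: "x1^2 + x4^2 + x7^2 + x3^2 + x6^2 + x2^2 + x5^2
      = 1 / (\<Prod>i=1..7. a i) * psi7 ((a 1)^2) ((a 2)^2) ((a 3)^2) ((a 4)^2) ((a 5)^2) ((a 6)^2) ((a 7)^2)"
    using assms(1) by (rule cyclic_factorization_psi7)
  have "(\<Sum>i=1..7. a i * cos (\<alpha> i))
        = x1*x4*cos (\<alpha> 4) + x4*x7*cos (\<alpha> 7) + x7*x3*cos (\<alpha> 3) + x3*x6*cos (\<alpha> 6)
          + x6*x2*cos (\<alpha> 2) + x2*x5*cos (\<alpha> 5) + x5*x1*cos (\<alpha> 1)"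
    unfolding products by (simp add: eval_nat_numeral algebra_simps)
  also have "\<dots> \<le> cos (pi/7) * (x1^2 + x4^2 + x7^2 + x3^2 + x6^2 + x2^2 + x5^2)"
    by (rule cycle_cos_sum_le) (use assms(3) in \<open>simp add: eval_nat_numeral algebra_simps\<close>)
  also have "\<dots> = cos (pi / 7) * (1 / (\<Prod>i=1..7. a i))
      * psi7 ((a 1)^2) ((a 2)^2) ((a 3)^2) ((a 4)^2) ((a 5)^2) ((a 6)^2) ((a 7)^2)"
    by (simp only: squares mult.assoc)
  finally show ?thesis .
qed

end
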